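(* If a commutative ring $R$ has almost stable range 1, then $R$ is locally stable.
   Context: All rings are commutative with identity. A ring $S$ has stable range 1 if whenever $aS+bS=S$ there is $y\in S$ with $a+by$ a unit. $R$ has almost stable range 1 if every proper homomorphic image $R/I$ with $I\neq 0$ has stable range 1. $R$ is locally stable if whenever $a,b\in R$ with $aR+bR=R$ there is $y\in R$ such that $R/(a+by)R$ has stable range 1. *)

theory Defs
  imports "HOL-Algebra.QuotRing"
begin

definition comaximal :: "('a, 'b) ring_scheme \<Rightarrow> 'a \<Rightarrow> 'a \<Rightarrow> bool" where
  "comaximal S a b \<longleftrightarrow>
     (\<exists>x\<in>carrier S. \<exists>z\<in>carrier S. (a \<otimes>\<^bsub>S\<^esub> x) \<oplus>\<^bsub>S\<^esub> (b \<otimes>\<^bsub>S\<^esub> z) = \<one>\<^bsub>S\<^esub>)"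

definition stable_range_1 :: "('a, 'b) ring_scheme \<Rightarrow> bool" where
  "stable_range_1 S \<longleftrightarrow>
     (\<forall>a\<in>carrier S. \<forall>b\<in>carrier S. comaximal S a b \<longrightarrow>
        (\<exists>y\<in>carrier S. a \<oplus>\<^bsub>S\<^esub> (b \<otimes>\<^bsub>S\<^esub> y) \<in> Units S))"

definition almost_stable_range_1 :: "('a, 'b) ring_scheme \<Rightarrow> bool" where
  "almost_stable_range_1 R \<longleftrightarrow>
     (\<forall>I. ideal I R \<and> I \<noteq> {\<zero>\<^bsub>R\<^esub>} \<longrightarrow> stable_range_1 (R Quot I))"

definition locally_stable :: "('a, 'b) ring_scheme \<Rightarrow> bool" where
  "locally_stable R \<longleftrightarrow>
     (\<forall>a\<in>carrier R. \<forall>b\<in>carrier R. comaximal R a b \<longrightarrow>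
        (\<exists>y\<in>carrier R. stable_range_1 (R Quot (PIdl\<^bsub>R\<^esub> (a \<oplus>\<^bsub>R\<^esub> (b \<otimes>\<^bsub>R\<^esub> y))))))"

end

theory Submission
  imports Defs
begin

text \<open>If \<open>a \<noteq> 0\<close>, the choice \<open>y = 0\<close> works: \<open>R/aR\<close> is the quotient by a nonzero
  ideal. If \<open>a = 0\<close>, comaximality makes \<open>b\<close> a unit with inverse \<open>z\<close>, and \<open>y = z\<close>
  gives \<open>a + b y = 1\<close>, whose quotient is the zero ring; that has stable range 1 trivially.\<close>

lemma (in ring) stable_range_1_if_one_eq_zero:
  assumes "\<one> = \<zero>"
  shows "stable_range_1 R"
  unfolding stable_range_1_def
proof (intro ballI impI)
  fix a b assume a: "a \<in> carrier R" and b: "b \<in> carrier R"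
  have "a = \<one>"
    using a assms by (metis r_one r_null)
  then have "a \<oplus> b \<otimes> \<zero> \<in> Units R"
    using a b by simp
  then show "\<exists>y\<in>carrier R. a \<oplus> b \<otimes> y \<in> Units R"
    by blast
qed

lemma (in ring) stable_range_1_Quot_carrier: "stable_range_1 (R Quot carrier R)"
proof (rule ring.stable_range_1_if_one_eq_zero)
  show "ring (R Quot carrier R)"
    by (rule ideal.quotient_is_ring[OF oneideal])
  have "carrier R +> \<one> = carrier R"
    by (simp add: a_rcos_zero oneideal)
  then show "\<one>\<^bsub>R Quot carrier R\<^esub> = \<zero>\<^bsub>R Quot carrier R\<^esub>"
    by (simp add: FactRing_def)
qed

lemma (in cring) locally_stable_if_almost_stable_range_1:
  assumes "almost_stable_range_1 R"
  shows "locally_stable R"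
  unfolding locally_stable_def
proof (intro ballI impI)
  fix a b assume a: "a \<in> carrier R" and b: "b \<in> carrier R" and "comaximal R a b"
  show "\<exists>y\<in>carrier R. stable_range_1 (R Quot PIdl (a \<oplus> b \<otimes> y))"
  proof (cases "a = \<zero>")
    case False
    have "ideal (PIdl a) R" and "PIdl a \<noteq> {\<zero>}"
      using a False cgenideal_ideal cgenideal_self by auto
    then have "stable_range_1 (R Quot PIdl (a \<oplus> b \<otimes> \<zero>))"
      using assms a b by (simp add: almost_stable_range_1_def)
    then show ?thesis
      by blast
  next
    case True
    with \<open>comaximal R a b\<close> obtain z where z: "z \<in> carrier R" and "b \<otimes> z = \<one>"
      using a b by (auto simp: comaximal_def)
    then have "a \<oplus> b \<otimes> z = \<one>"
      using True b by simp
    moreover have "PIdl \<one> = carrier R"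
      using ideal.one_imp_carrier[OF cgenideal_ideal] cgenideal_self by simp
    ultimately show ?thesis
      using z stable_range_1_Quot_carrier by metis
  qed
qed

theorem corollary2p2:
  fixes R :: "('a, 'b) ring_scheme"
  assumes "cring R"
    and "almost_stable_range_1 R"
  shows "locally_stable R"
  using cring.locally_stable_if_almost_stable_range_1[OF assms] .

end
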